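(* Let $n\ge 2$ and let $t$ be a (non-plane, unranked) rooted binary tree with $n$ leaves. Then the number of ranked (non-plane) trees with $n$ leaves that map to $t$ when ranks are forgotten is \[ \frac{(n-1)!}{\prod_{u\in\breve V(t)}\lfloor t(u)\rfloor}\;2^{\gimel(t)-s(t)}, \] where $\breve V(t)$ is the set of internal nodes of $t$, $\lfloor t(u)\rfloor$ is the number of internal nodes of the subtree $t(u)$ rooted at $u$, $\gimel(t)$ is the number of cherry nodes of $t$ (internal nodes both of whose children are leaves), and $s(t)$ is the number of internal nodes $v$ whose two child subtrees are isomorphic.
   Context: All trees are finite, rooted and binary (each internal node has exactly two children). An internal ranking of a tree with $n$ leaves is a bijective labeling of its $n-1$ internal nodes by $\{1,\dots,n-1\}$ such that the root has rank $1$ and each internal node has smaller rank than each of its internal descendants. A ranked tree is a (non-plane) tree together with an internal ranking, two ranked trees being identified if there is a rooted-tree isomorphism between them preserving ranks. Forgetting the ranks maps a ranked tree to a tree (up to rooted isomorphism). *)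

theory Defs
  imports Complex_Main
begin

text \<open>Plane binary trees (shapes); non-plane trees are their classes under \<open>tiso\<close>.\<close>
datatype tree = Leaf | Node tree tree

inductive tiso :: "tree \<Rightarrow> tree \<Rightarrow> bool" where
  "tiso Leaf Leaf"
| "tiso a c \<Longrightarrow> tiso b d \<Longrightarrow> tiso (Node a b) (Node c d)"
| "tiso a d \<Longrightarrow> tiso b c \<Longrightarrow> tiso (Node a b) (Node c d)"

fun leaves :: "tree \<Rightarrow> nat" where
  "leaves Leaf = 1"
| "leaves (Node a b) = leaves a + leaves b"

fun internals :: "tree \<Rightarrow> nat" where
  "internals Leaf = 0"
| "internals (Node a b) = 1 + internals a + internals b"

fun subtree_prod :: "tree \<Rightarrow> nat" where
  "subtree_prod Leaf = 1"
| "subtree_prod (Node a b) = internals (Node a b) * subtree_prod a * subtree_prod b"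

fun cherries :: "tree \<Rightarrow> nat" where
  "cherries Leaf = 0"
| "cherries (Node a b) = (if a = Leaf \<and> b = Leaf then 1 else 0) + cherries a + cherries b"

fun sym_nodes :: "tree \<Rightarrow> nat" where
  "sym_nodes Leaf = 0"
| "sym_nodes (Node a b) = (if tiso a b then 1 else 0) + sym_nodes a + sym_nodes b"

datatype rtree = RLeaf | RNode nat rtree rtree

fun shape :: "rtree \<Rightarrow> tree" where
  "shape RLeaf = Leaf"
| "shape (RNode k a b) = Node (shape a) (shape b)"

fun labels :: "rtree \<Rightarrow> nat list" where
  "labels RLeaf = []"
| "labels (RNode k a b) = k # labels a @ labels b"

fun heap_ordered :: "rtree \<Rightarrow> bool" where
  "heap_ordered RLeaf = True"
| "heap_ordered (RNode k a b) =
     ((\<forall>j \<in> set (labels a) \<union> set (labels b). k < j) \<and> heap_ordered a \<and> heap_ordered b)"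

definition is_ranked :: "nat \<Rightarrow> rtree \<Rightarrow> bool" where
  "is_ranked n r \<longleftrightarrow> leaves (shape r) = n \<and> distinct (labels r)
     \<and> set (labels r) = {1..<n} \<and> heap_ordered r"

inductive riso :: "rtree \<Rightarrow> rtree \<Rightarrow> bool" where
  "riso RLeaf RLeaf"
| "riso a c \<Longrightarrow> riso b d \<Longrightarrow> riso (RNode k a b) (RNode k c d)"
| "riso a d \<Longrightarrow> riso b c \<Longrightarrow> riso (RNode k a b) (RNode k c d)"

text \<open>ranked (non-plane) trees with n leaves mapping to the non-plane tree of t:
  classes of ranked plane trees under rank-preserving isomorphism\<close>
definition ranked_over :: "nat \<Rightarrow> tree \<Rightarrow> rtree set set" where
  "ranked_over n t = {r. is_ranked n r \<and> tiso (shape r) t} // {(x, y). riso x y}"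

end

theory Submission
  imports Defs "HOL-Library.Multiset"
begin

text \<open>There are
  \<open>2^(n - 1 - s(t))\<close> plane representatives of \<open>t\<close>, each carrying \<open>(n-1)!/\<Prod>\<lfloor>t(u)\<rfloor>\<close>
  increasing labellings by the hook length formula. Since labels are distinct, swapping the
  children of a node changes a labelled plane tree unless the node is a cherry, so every
  isomorphism class has exactly \<open>2^(n - 1 - \<gimel>(t))\<close> elements.\<close>

lemma tiso_commute: "tiso a b \<longleftrightarrow> tiso b a"
proof -
  have "tiso a b \<Longrightarrow> tiso b a" for a b
    by (induction rule: tiso.induct) (auto intro: tiso.intros)
  then show ?thesis by blast
qed

lemma Leaf_tiso_iff: "tiso Leaf z \<longleftrightarrow> z = Leaf"
  by (auto elim: tiso.cases intro: tiso.intros)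

lemma tiso_Leaf_iff: "tiso z Leaf \<longleftrightarrow> z = Leaf"
  using Leaf_tiso_iff tiso_commute by blast

lemma Node_tiso_iff: "tiso (Node a b) z \<longleftrightarrow>
    (\<exists>c d. z = Node c d \<and> (tiso a c \<and> tiso b d \<or> tiso a d \<and> tiso b c))"
  by (auto elim: tiso.cases intro: tiso.intros)

lemma tiso_trans: "tiso a b \<Longrightarrow> tiso b c \<Longrightarrow> tiso a c"
proof (induction a arbitrary: b c)
  case Leaf
  then show ?case by (simp add: Leaf_tiso_iff)
next
  case (Node a1 a2)
  obtain b1 b2 where b: "b = Node b1 b2" "tiso a1 b1 \<and> tiso a2 b2 \<or> tiso a1 b2 \<and> tiso a2 b1"
    using Node.prems(1) by (auto simp: Node_tiso_iff)
  obtain c1 c2 where c: "c = Node c1 c2" "tiso b1 c1 \<and> tiso b2 c2 \<or> tiso b1 c2 \<and> tiso b2 c1"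
    using Node.prems(2) b(1) by (auto simp: Node_tiso_iff)
  show ?case
    using b(2) c Node.IH by (blast intro: tiso.intros)
qed

lemma tiso_leaves: "tiso a b \<Longrightarrow> leaves a = leaves b"
  by (induction rule: tiso.induct) auto

lemma tiso_internals: "tiso a b \<Longrightarrow> internals a = internals b"
  by (induction rule: tiso.induct) auto

lemma tiso_subtree_prod: "tiso a b \<Longrightarrow> subtree_prod a = subtree_prod b"
  by (induction rule: tiso.induct) (auto simp: tiso_internals algebra_simps)

lemma tiso_cherries: "tiso a b \<Longrightarrow> cherries a = cherries b"
  by (induction rule: tiso.induct) (auto simp: Leaf_tiso_iff tiso_Leaf_iff)

lemma leaves_eq_internals_Suc: "leaves t = Suc (internals t)"
  by (induction t) auto

lemma cherries_le_internals: "cherries t \<le> internals t"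
  by (induction t) auto

lemma sym_nodes_le_internals: "sym_nodes t \<le> internals t"
  by (induction t) auto

lemma subtree_prod_pos: "subtree_prod t > 0"
  by (induction t) auto

lemma riso_refl: "riso r r"
  by (induction r) (auto intro: riso.intros)

lemma riso_commute: "riso a b \<longleftrightarrow> riso b a"
proof -
  have "riso a b \<Longrightarrow> riso b a" for a b
    by (induction rule: riso.induct) (auto intro: riso.intros)
  then show ?thesis by blast
qed

lemma RLeaf_riso_iff: "riso RLeaf z \<longleftrightarrow> z = RLeaf"
  by (auto elim: riso.cases intro: riso.intros)

lemma RNode_riso_iff: "riso (RNode k a b) z \<longleftrightarrow>
    (\<exists>c d. z = RNode k c d \<and> (riso a c \<and> riso b d \<or> riso a d \<and> riso b c))"
  by (auto elim: riso.cases intro: riso.intros)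

lemma riso_trans: "riso a b \<Longrightarrow> riso b c \<Longrightarrow> riso a c"
proof (induction a arbitrary: b c)
  case RLeaf
  then show ?case by (simp add: RLeaf_riso_iff)
next
  case (RNode k a1 a2)
  obtain b1 b2 where b: "b = RNode k b1 b2" "riso a1 b1 \<and> riso a2 b2 \<or> riso a1 b2 \<and> riso a2 b1"
    using RNode.prems(1) by (auto simp: RNode_riso_iff)
  obtain c1 c2 where c: "c = RNode k c1 c2" "riso b1 c1 \<and> riso b2 c2 \<or> riso b1 c2 \<and> riso b2 c1"
    using RNode.prems(2) b(1) by (auto simp: RNode_riso_iff)
  show ?case
    using b(2) c RNode.IH by (blast intro: riso.intros)
qed

lemma equiv_riso: "equiv UNIV {(x, y). riso x y}"
  unfolding equiv_def refl_on_def sym_def trans_def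
  using riso_refl riso_commute riso_trans by blast

lemma riso_mset_labels: "riso a b \<Longrightarrow> mset (labels a) = mset (labels b)"
  by (induction rule: riso.induct) (auto simp: add_ac)

lemma riso_set_labels: "riso a b \<Longrightarrow> set (labels a) = set (labels b)"
  using riso_mset_labels mset_eq_setD by blast

lemma riso_distinct_labels: "riso a b \<Longrightarrow> distinct (labels a) \<longleftrightarrow> distinct (labels b)"
  using riso_mset_labels mset_eq_imp_distinct_iff by blast

lemma riso_shape: "riso a b \<Longrightarrow> tiso (shape a) (shape b)"
  by (induction rule: riso.induct) (auto intro: tiso.intros)

lemma riso_heap_ordered: "riso a b \<Longrightarrow> heap_ordered a \<Longrightarrow> heap_ordered b"
  by (induction rule: riso.induct) (auto dest: riso_set_labels)

lemma labels_eq_Nil_iff: "labels r = [] \<longleftrightarrow> r = RLeaf"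
  by (cases r) auto

lemma length_labels: "length (labels r) = internals (shape r)"
  by (induction r) auto

lemma card_swapped_products:
  assumes "inj f" "finite A" "finite B" "A \<inter> B = {}"
  shows "card (f ` (A \<times> B) \<union> f ` (B \<times> A)) = 2 * (card A * card B)"
proof -
  have "f ` (A \<times> B) \<inter> f ` (B \<times> A) = {}"
    using assms(1,4) by (auto dest: injD)
  then show ?thesis
    using assms(1-3)
    by (simp add: card_Un_disjoint card_image inj_on_subset card_cartesian_product)
qed

lemma tiso_class_Node:
  "{z. tiso (Node a b) z} =
     case_prod Node ` ({z. tiso a z} \<times> {z. tiso b z}) \<union>
     case_prod Node ` ({z. tiso b z} \<times> {z. tiso a z})"
  by (auto simp: Node_tiso_iff)

lemma card_tiso_class: "card {z. tiso t z} = 2 ^ (internals t - sym_nodes t)"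
proof (induction t)
  case Leaf
  then show ?case by (simp add: Leaf_tiso_iff)
next
  case (Node a b)
  let ?S = "\<lambda>t. {z. tiso t z}"
  have fin: "finite (?S a)" "finite (?S b)"
    using Node.IH card_gt_0_iff by (metis zero_less_numeral zero_less_power)+
  have inj: "inj (case_prod Node)" by (auto simp: inj_def)
  have le: "sym_nodes a \<le> internals a" "sym_nodes b \<le> internals b"
    by (rule sym_nodes_le_internals)+
  show ?case
  proof (cases "tiso a b")
    case True
    then have "tiso a z \<longleftrightarrow> tiso b z" for z
      using tiso_commute tiso_trans by metis
    then have "?S a = ?S b" by simp
    then have "card (?S (Node a b)) = card (?S a) * card (?S b)"
      by (simp add: tiso_class_Node card_image inj_on_subset[OF inj] card_cartesian_product)
    also have "\<dots> = 2 ^ (internals a - sym_nodes a + (internals b - sym_nodes b))"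
      by (simp add: Node.IH power_add)
    finally show ?thesis using True le by simp
  next
    case False
    moreover have "tiso a b" if "tiso a z" "tiso b z" for z
      using that tiso_commute tiso_trans by metis
    ultimately have "?S a \<inter> ?S b = {}" by blast
    then have "card (?S (Node a b)) = 2 * (card (?S a) * card (?S b))"
      by (simp add: tiso_class_Node card_swapped_products[OF inj fin])
    also have "\<dots> = 2 ^ Suc (internals a - sym_nodes a + (internals b - sym_nodes b))"
      by (simp add: Node.IH power_add)
    finally show ?thesis using False le by (simp add: Suc_diff_le)
  qed
qed

lemma riso_class_RNode:
  "{z. riso (RNode k a b) z} =
     (\<lambda>(c, d). RNode k c d) ` ({z. riso a z} \<times> {z. riso b z}) \<union>
     (\<lambda>(c, d). RNode k c d) ` ({z. riso b z} \<times> {z. riso a z})"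
  by (auto simp: RNode_riso_iff)

lemma card_riso_class:
  "distinct (labels r) \<Longrightarrow> card {z. riso r z} = 2 ^ (internals (shape r) - cherries (shape r))"
proof (induction r)
  case RLeaf
  then show ?case by (simp add: RLeaf_riso_iff)
next
  case (RNode k a b)
  let ?S = "\<lambda>r. {z. riso r z}"
  have IH: "card (?S a) = 2 ^ (internals (shape a) - cherries (shape a))"
    "card (?S b) = 2 ^ (internals (shape b) - cherries (shape b))"
    using RNode by auto
  show ?case
  proof (cases "a = RLeaf \<and> b = RLeaf")
    case True
    then have "?S (RNode k a b) = {RNode k RLeaf RLeaf}"
      by (auto simp: RNode_riso_iff RLeaf_riso_iff)
    then show ?thesis using True by simp
  next
    case False
    have fin: "finite (?S a)" "finite (?S b)"
      using IH card_gt_0_iff by (metis zero_less_numeral zero_less_power)+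
    have inj: "inj (\<lambda>(c, d). RNode k c d)" by (auto simp: inj_def)
    have "set (labels a) \<inter> set (labels b) = {}"
      using RNode.prems by simp
    then have "\<not> riso a b"
      using False riso_set_labels by (fastforce simp: labels_eq_Nil_iff[symmetric])
    moreover have "riso a b" if "riso a z" "riso b z" for z
      using that riso_commute riso_trans by metis
    ultimately have "?S a \<inter> ?S b = {}" by blast
    then have "card (?S (RNode k a b)) = 2 * (card (?S a) * card (?S b))"
      by (simp add: riso_class_RNode card_swapped_products[OF inj fin])
    moreover have "cherries (shape (RNode k a b)) = cherries (shape a) + cherries (shape b)"
      using False by (auto elim: shape.elims)
    moreover have "cherries (shape a) \<le> internals (shape a)" "cherries (shape b) \<le> internals (shape b)"
      by (rule cherries_le_internals)+
    ultimately show ?thesis by (simp add: IH Suc_diff_le power_add[symmetric])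
  qed
qed

definition heap_labellings :: "tree \<Rightarrow> nat set \<Rightarrow> rtree set" where
  "heap_labellings s S =
     {r. shape r = s \<and> distinct (labels r) \<and> set (labels r) = S \<and> heap_ordered r}"

lemma heap_labellings_Leaf: "heap_labellings Leaf S = (if S = {} then {RLeaf} else {})"
  by (auto simp: heap_labellings_def elim: shape.elims)

lemma root_label_eq_Min:
  assumes "heap_ordered (RNode k x y)" "finite (set (labels (RNode k x y)))"
  shows "k = Min (set (labels (RNode k x y)))"
  using assms by (intro Min_eqI[symmetric]) (auto intro: less_imp_le)

lemma heap_labellings_Node:
  assumes "finite S" "S \<noteq> {}"
  defines "T \<equiv> S - {Min S}"
  shows "heap_labellings (Node a b) S =
    (\<Union>A \<in> {A. A \<subseteq> T \<and> card A = internals a}.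
       (\<lambda>(x, y). RNode (Min S) x y) ` (heap_labellings a A \<times> heap_labellings b (T - A)))"
    (is "?L = ?R")
proof
  show "?L \<subseteq> ?R"
  proof
    fix r assume r: "r \<in> ?L"
    then obtain k x y where r_eq: "r = RNode k x y" and shapes: "shape x = a" "shape y = b"
      by (auto simp: heap_labellings_def elim: shape.elims)
    have k: "k = Min S"
      using r root_label_eq_Min[of k x y] assms(1) by (simp add: heap_labellings_def r_eq)
    have "card (set (labels x)) = internals a"
      using r shapes by (simp add: heap_labellings_def r_eq distinct_card length_labels)
    moreover have "set (labels x) \<subseteq> T" "set (labels y) = T - set (labels x)"
      using r k by (auto simp: heap_labellings_def r_eq T_def)
    ultimately show "r \<in> ?R"
      using r shapes k by (auto simp: heap_labellings_def r_eq intro!: bexI[of _ "set (labels x)"])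
  qed
next
  have "Min S \<in> S" "\<forall>j \<in> T. Min S < j"
    using assms by (auto simp: T_def less_le)
  then show "?R \<subseteq> ?L"
    by (auto simp: heap_labellings_def T_def) blast+
qed

lemma card_heap_labellings:
  assumes "finite S" "card S = internals s"
  shows "card (heap_labellings s S) * subtree_prod s = fact (internals s)"
  using assms
proof (induction s arbitrary: S)
  case Leaf
  then show ?case by (simp add: heap_labellings_Leaf)
next
  case (Node a b)
  define T where "T = S - {Min S}"
  define Ix where "Ix = {A. A \<subseteq> T \<and> card A = internals a}"
  define F where
    "F A = (\<lambda>(x, y). RNode (Min S) x y) ` (heap_labellings a A \<times> heap_labellings b (T - A))" for A
  have "S \<noteq> {}" using Node.prems by auto
  then have decomp: "heap_labellings (Node a b) S = (\<Union>A \<in> Ix. F A)"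
    using heap_labellings_Node[OF Node.prems(1)] by (simp add: Ix_def F_def T_def)
  have fin_T: "finite T" and card_T: "card T = internals a + internals b"
    using Node.prems \<open>S \<noteq> {}\<close> by (simp_all add: T_def)
  have card_F:
    "card (F A) * (subtree_prod a * subtree_prod b) = fact (internals a) * fact (internals b)"
    if "A \<in> Ix" for A
  proof -
    have A: "A \<subseteq> T" "card A = internals a" "finite A"
      using that fin_T finite_subset by (auto simp: Ix_def)
    then have "card (T - A) = internals b"
      using card_T fin_T by (simp add: card_Diff_subset)
    then have "card (heap_labellings a A) * subtree_prod a = fact (internals a)"
      "card (heap_labellings b (T - A)) * subtree_prod b = fact (internals b)"
      using Node.IH A fin_T by auto
    moreover have "inj (\<lambda>(x, y). RNode (Min S) x y)" by (auto simp: inj_def)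
    ultimately show ?thesis
      by (simp add: F_def card_image inj_on_subset card_cartesian_product algebra_simps)
  qed
  have "finite (F A)" if "A \<in> Ix" for A
    using card_F[OF that] by (metis card.infinite fact_nonzero mult_eq_0_iff)
  moreover have "F A \<inter> F B = {}" if "A \<noteq> B" for A B
    using that by (auto simp: F_def heap_labellings_def)
  ultimately have "card (heap_labellings (Node a b) S) = (\<Sum>A \<in> Ix. card (F A))"
    unfolding decomp using fin_T by (intro card_UN_disjoint) (auto simp: Ix_def)
  then have "card (heap_labellings (Node a b) S) * (subtree_prod a * subtree_prod b)
      = card Ix * (fact (internals a) * fact (internals b))"
    by (simp add: sum_distrib_right card_F)
  also have "\<dots> = fact (internals a + internals b)"
    using fin_T card_T binomial_fact_lemma[of "internals a" "internals a + internals b"]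
    by (simp add: Ix_def n_subsets algebra_simps)
  finally show ?case
    by (simp add: algebra_simps)
qed

lemma card_quotient_uniform:
  assumes "finite A" "equiv UNIV R" "R `` A \<subseteq> A" "\<And>x. x \<in> A \<Longrightarrow> card (R `` {x}) = k"
  shows "card A = k * card (A // R)"
proof -
  have "\<Union>(A // R) = A"
    using assms(2,3) by (auto simp: quotient_def equiv_def refl_on_def)
  moreover have "X \<inter> Y = {}" if "X \<in> A // R" "Y \<in> A // R" "X \<noteq> Y" for X Y
    using that quotient_disj[OF assms(2)] by (auto simp: quotient_def)
  moreover have "finite (A // R)"
    using assms(1) by (simp add: quotient_def)
  moreover have "\<forall>X \<in> A // R. card X = k"
    using assms(4) by (auto simp: quotient_def)
  ultimately show ?thesis
    using card_partition[of "A // R" k] assms(1) by auto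
qed

lemma card_ranked_plane_trees:
  assumes "leaves t = n"
  shows "card {r. is_ranked n r \<and> tiso (shape r) t} * subtree_prod t
    = 2 ^ (internals t - sym_nodes t) * fact (n - 1)"
proof -
  let ?L = "\<lambda>s. heap_labellings s {1..<n}"
  have internals_t: "internals t = n - 1"
    using assms leaves_eq_internals_Suc[of t] by simp
  have decomp: "{r. is_ranked n r \<and> tiso (shape r) t} = (\<Union>s \<in> {s. tiso t s}. ?L s)"
    using assms tiso_commute
    by (auto simp: is_ranked_def heap_labellings_def dest: tiso_leaves)
  have card_L: "card (?L s) * subtree_prod t = fact (n - 1)" if "tiso t s" for s
    using that card_heap_labellings[of "{1..<n}" s] internals_t
    by (simp add: tiso_internals tiso_subtree_prod)
  have fin_shapes: "finite {s. tiso t s}"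
    using card_tiso_class[of t] card_gt_0_iff by (metis zero_less_numeral zero_less_power)
  have "finite (?L s)" if "tiso t s" for s
    using card_L[OF that] by (metis card.infinite fact_nonzero mult_is_0)
  then have "card {r. is_ranked n r \<and> tiso (shape r) t}
      = (\<Sum>s \<in> {s. tiso t s}. card (?L s))"
    unfolding decomp using fin_shapes
    by (intro card_UN_disjoint) (auto simp: heap_labellings_def)
  also have "\<dots> * subtree_prod t = (\<Sum>s \<in> {s. tiso t s}. fact (n - 1))"
    unfolding sum_distrib_right by (rule sum.cong[OF refl], rule card_L) simp
  finally show ?thesis
    by (simp add: card_tiso_class)
qed

lemma card_ranked_plane_trees_eq_classes:
  assumes "leaves t = n"
  shows "card {r. is_ranked n r \<and> tiso (shape r) t}
    = 2 ^ (internals t - cherries t) * card (ranked_over n t)"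
  unfolding ranked_over_def
proof (rule card_quotient_uniform[OF _ equiv_riso])
  show "finite {r. is_ranked n r \<and> tiso (shape r) t}"
    using card_ranked_plane_trees[OF assms] subtree_prod_pos[of t]
    by (metis card.infinite fact_nonzero mult_is_0 power_not_zero zero_neq_numeral)
  have "is_ranked n r' \<and> tiso (shape r') t" if "riso r r'" "is_ranked n r" "tiso (shape r) t" for r r'
  proof -
    have "tiso (shape r') (shape r)"
      using riso_shape[OF that(1)] tiso_commute by blast
    then show ?thesis
      using that riso_set_labels[OF that(1)] riso_distinct_labels[OF that(1)]
        riso_heap_ordered[OF that(1)] tiso_leaves tiso_trans
      by (simp add: is_ranked_def)
  qed
  then show "{(x, y). riso x y} `` {r. is_ranked n r \<and> tiso (shape r) t}
      \<subseteq> {r. is_ranked n r \<and> tiso (shape r) t}"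
    by auto
  show "card ({(x, y). riso x y} `` {r}) = 2 ^ (internals t - cherries t)"
    if "r \<in> {r. is_ranked n r \<and> tiso (shape r) t}" for r
    using that card_riso_class[of r]
      tiso_internals[of "shape r" t] tiso_cherries[of "shape r" t]
    by (simp add: is_ranked_def Image_singleton)
qed

theorem lemma2p4:
  fixes t :: tree and n :: nat
  assumes "n \<ge> 2" and "leaves t = n"
  shows "real (card (ranked_over n t)) =
    (fact (n - 1) :: real) / real (subtree_prod t) * 2 ^ cherries t / 2 ^ sym_nodes t"
proof -
  define k where "k = internals t"
  let ?Q = "card (ranked_over n t)"
  have n: "n - 1 = k"
    using assms(2) leaves_eq_internals_Suc[of t] by (simp add: k_def)
  have le: "cherries t \<le> k" "sym_nodes t \<le> k"
    by (simp_all add: k_def cherries_le_internals sym_nodes_le_internals)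
  have count: "2 ^ (k - cherries t) * ?Q * subtree_prod t = 2 ^ (k - sym_nodes t) * fact k"
    using card_ranked_plane_trees[OF assms(2)] card_ranked_plane_trees_eq_classes[OF assms(2)] n
    by (simp add: k_def)
  have "2 ^ k * (?Q * subtree_prod t * 2 ^ sym_nodes t)
      = (2 ^ (k - cherries t) * ?Q * subtree_prod t) * 2 ^ cherries t * 2 ^ sym_nodes t"
    using le by (simp add: algebra_simps flip: power_add)
  also have "\<dots> = (2 ^ (k - sym_nodes t) * fact k) * 2 ^ cherries t * 2 ^ sym_nodes t"
    by (simp only: count)
  also have "\<dots> = 2 ^ k * (fact k * 2 ^ cherries t)"
    using le by (simp add: algebra_simps flip: power_add)
  finally have "?Q * subtree_prod t * 2 ^ sym_nodes t = fact k * 2 ^ cherries t"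
    by simp
  then have "real ?Q * real (subtree_prod t) * 2 ^ sym_nodes t = fact k * 2 ^ cherries t"
    by (metis of_nat_fact of_nat_mult of_nat_numeral of_nat_power)
  then show ?thesis
    using subtree_prod_pos[of t] n by (simp add: field_simps)
qed

end
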